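(* Let $\{V_0(n)\}_{n\in\mathbb{Z}}$ be a real-valued sequence and let $\psi_1,\dots,\psi_k$ be sequences satisfying $$\big(-\bigtriangleup^2+V_0(n)\big)\psi_i(n)=\epsilon_i\,\psi_i(n+2),\qquad i=1,\dots,k,$$ for pairwise different real constants $\epsilon_1,\dots,\epsilon_k$, and assume the Casoratians $C(\psi_1,\dots,\psi_j)(n)$ are nonzero for all $n$ and $j=1,\dots,k$. Define recursively, for $i=1,\dots,k$, $$\hat\psi_i(n)=\big(-\bigtriangleup+f_{i-1}(n)\big)\cdots\big(-\bigtriangleup+f_1(n)\big)\psi_i(n),\qquad f_i(n)=\frac{\bigtriangleup\hat\psi_i(n)}{\hat\psi_i(n)},$$ $$V_i(n)=V_{i-1}(n+1)-2\bigtriangleup f_i(n+1)$$ (with $\hat\psi_1=\psi_1$; the $f_j(n)$ act as multiplication operators). Then for $i=1,\dots,k$: $$\hat\psi_i(n)=(-1)^{i-1}\frac{C(\psi_1,\dots,\psi_i)(n)}{C(\psi_1,\dots,\psi_{i-1})(n)},\qquad \big(-\bigtriangleup^2+V_{i-1}(n)\big)\hat\psi_i(n)=\epsilon_i\,\hat\psi_i(n+2),$$ $$f_j(n)=\frac{C(\psi_1,\dots,\psi_{j-1})(n)}{C(\psi_1,\dots,\psi_{j-1})(n+1)}\cdot\frac{C(\psi_1,\dots,\psi_j)(n+1)}{C(\psi_1,\dots,\psi_j)(n)}-1,$$ and $$V_i(n)=V_0(n+i)-2\bigtriangleup\big(f_1(n+i)+f_2(n+i-1)+\dots+f_i(n+1)\big)=V_0(n+i)-2\bigtriangleup\frac{D_i(n)}{C(\psi_1,\dots,\psi_i)(n+1)},$$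 where $D_i(n)$ is the $i\times i$ determinant whose columns are indexed by $\psi_1,\dots,\psi_i$ and whose rows are the values at $n+1,n+2,\dots,n+i-1,n+i+1$, i.e. $D_i(n)=\det\big(\psi_c(n+r_\ell)\big)_{\ell,c=1}^{i}$ with $(r_1,\dots,r_i)=(1,2,\dots,i-1,i+1)$.
   Context: For a sequence $\psi:\mathbb{Z}\to\mathbb{C}$, $\bigtriangleup\psi(n)=\psi(n+1)-\psi(n)$ and $\bigtriangleup^2\psi(n)=\psi(n+2)-2\psi(n+1)+\psi(n)$. The Casoratian of sequences $\psi_1,\dots,\psi_m$ is $C(\psi_1,\dots,\psi_m)(n)=\det\big(\psi_c(n+r-1)\big)_{r,c=1}^{m}$ (rows $n,n+1,\dots,n+m-1$), with the empty Casoratian $C()(n)=1$. *)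

theory Defs
  imports Complex_Main "Jordan_Normal_Form.Determinant"
begin

definition fdiff :: "(int \<Rightarrow> complex) \<Rightarrow> int \<Rightarrow> complex" where
  "fdiff \<psi> n = \<psi> (n + 1) - \<psi> n"

definition fdiff2 :: "(int \<Rightarrow> complex) \<Rightarrow> int \<Rightarrow> complex" where
  "fdiff2 \<psi> n = \<psi> (n + 2) - 2 * \<psi> (n + 1) + \<psi> n"

(* Casoratian of a list of sequences: det (psi_c(n+r))_{r,c}, rows n..n+m-1;
   empty Casoratian = det of the 0x0 matrix = 1 *)
definition casoratian :: "(int \<Rightarrow> complex) list \<Rightarrow> int \<Rightarrow> complex" where
  "casoratian \<psi>s n = det (mat (length \<psi>s) (length \<psi>s) (\<lambda>(r, c). (\<psi>s ! c) (n + int r)))"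

definition Cas :: "(nat \<Rightarrow> int \<Rightarrow> complex) \<Rightarrow> nat \<Rightarrow> int \<Rightarrow> complex" where
  "Cas \<psi> j n = casoratian (map \<psi> [1..<Suc j]) n"

(* D_i(n): rows n+1, ..., n+i-1, n+i+1; columns psi_1..psi_i *)
definition Dcas :: "(nat \<Rightarrow> int \<Rightarrow> complex) \<Rightarrow> nat \<Rightarrow> int \<Rightarrow> complex" where
  "Dcas \<psi> i n = det (mat i i (\<lambda>(r, c). \<psi> (Suc c)
      (n + (if r + 1 < i then int r + 1 else int i + 1))))"

(* apply (-\<Delta> + g_m) \<circ> ... \<circ> (-\<Delta> + g_1) to \<phi>, for gs = [g_1, ..., g_m] *)
definition apply_ops :: "(int \<Rightarrow> complex) list \<Rightarrow> (int \<Rightarrow> complex) \<Rightarrow> (int \<Rightarrow> complex)" where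
  "apply_ops gs \<phi> = foldl (\<lambda>\<chi> g. (\<lambda>n. - fdiff \<chi> n + g n * \<chi> n)) \<phi> gs"

primrec fs :: "(nat \<Rightarrow> int \<Rightarrow> complex) \<Rightarrow> nat \<Rightarrow> (int \<Rightarrow> complex) list" where
  "fs \<psi> 0 = []"
| "fs \<psi> (Suc i) = fs \<psi> i @
     [(let h = apply_ops (fs \<psi> i) (\<psi> (Suc i)) in (\<lambda>n. fdiff h n / h n))]"

definition hatpsi :: "(nat \<Rightarrow> int \<Rightarrow> complex) \<Rightarrow> nat \<Rightarrow> int \<Rightarrow> complex" where
  "hatpsi \<psi> i = apply_ops (fs \<psi> (i - 1)) (\<psi> i)"

definition ff :: "(nat \<Rightarrow> int \<Rightarrow> complex) \<Rightarrow> nat \<Rightarrow> int \<Rightarrow> complex" where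
  "ff \<psi> j = fs \<psi> j ! (j - 1)"

primrec VV :: "(int \<Rightarrow> real) \<Rightarrow> (nat \<Rightarrow> int \<Rightarrow> complex) \<Rightarrow> nat \<Rightarrow> int \<Rightarrow> complex" where
  "VV V0 \<psi> 0 = (\<lambda>n. complex_of_real (V0 n))"
| "VV V0 \<psi> (Suc i) = (\<lambda>n. VV V0 \<psi> i (n + 1) - 2 * fdiff (ff \<psi> (Suc i)) (n + 1))"

end

theory Submission
  imports Defs
begin

(* Each factor -\<Delta> + f_j, with f_j = \<Delta>h/h the logarithmic difference of a solution h,
   is a discrete Darboux transformation: it maps solutions of the equation with potential V_{j-1}
   to solutions with potential V_j, which gives the equations for the hat \<psi>_i.
   The composite L_j = (-\<Delta> + f_j) \<circ> ... \<circ> (-\<Delta> + f_1) is a difference operator of order j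
   with leading coefficient (-1)^j that annihilates \<psi>_1, ..., \<psi>_j. Since their Casoratian
   does not vanish, such an operator is unique, and expanding the bordered Casoratian
   C(\<psi>_1, ..., \<psi>_j, \<phi>) along its last column shows that it is
   \<phi> \<mapsto> (-1)^j C(\<psi>_1, ..., \<psi>_j, \<phi>) / C(\<psi>_1, ..., \<psi>_j).
   Applied to \<psi>_{j+1} this is the quotient formula for hat \<psi>_{j+1}; comparing the coefficients
   of \<phi>(n+i-1), the cofactor D_i on one side and the sum of the shifted f_l on the other,
   gives the determinant formula for V_i. *)

lemma darboux_defect:
  fixes h \<phi> V :: "int \<Rightarrow> complex" and e e' :: complex
  assumes nz: "\<And>n. h n \<noteq> 0"
    and heq: "\<And>n. - fdiff2 h n + V n * h n = e' * h (n + 2)"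
  defines "A \<equiv> \<lambda>n. - fdiff \<phi> n + fdiff h n / h n * \<phi> n"
    and "D \<equiv> \<lambda>n. - fdiff2 \<phi> n + V n * \<phi> n - e * \<phi> (n + 2)"
  shows "- fdiff2 A n + (V (n + 1) - 2 * fdiff (\<lambda>n. fdiff h n / h n) (n + 1)) * A n - e * A (n + 2)
    = h (n + 3) / h (n + 2) * D n - D (n + 1)"
proof -
  have shifts: "n + 1 + 1 = n + 2" "n + 2 + 1 = n + 3" "n + 1 + 2 = n + 3" by simp_all
  have V0: "V n = (e' * h (n + 2) + h (n + 2) - 2 * h (n + 1) + h n) / h n"
    using heq[of n] nz[of n] by (simp add: fdiff2_def field_simps)
  have V1: "V (n + 1) = (e' * h (n + 3) + h (n + 3) - 2 * h (n + 2) + h (n + 1)) / h (n + 1)"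
    using heq[of "n + 1"] nz[of "n + 1"] by (simp add: fdiff2_def field_simps shifts)
  show ?thesis
    unfolding A_def D_def fdiff_def fdiff2_def shifts V0 V1
    using nz[of n] nz[of "n + 1"] nz[of "n + 2"] by (simp add: field_simps) algebra
qed

lemma darboux_transform:
  fixes h \<phi> V :: "int \<Rightarrow> complex" and e e' :: complex
  assumes "\<And>n. h n \<noteq> 0"
    and "\<And>n. - fdiff2 h n + V n * h n = e' * h (n + 2)"
    and "\<And>n. - fdiff2 \<phi> n + V n * \<phi> n = e * \<phi> (n + 2)"
  defines "A \<equiv> \<lambda>n. - fdiff \<phi> n + fdiff h n / h n * \<phi> n"
  shows "- fdiff2 A n + (V (n + 1) - 2 * fdiff (\<lambda>n. fdiff h n / h n) (n + 1)) * A n = e * A (n + 2)"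
  using darboux_defect[OF assms(1,2), of \<phi> n e] assms(3) unfolding A_def by simp

(* op_coeff gs r n is the coefficient of \<phi> (n + r) in apply_ops gs \<phi> n (apply_ops_eq_sum). *)
definition op_coeff :: "(int \<Rightarrow> complex) list \<Rightarrow> nat \<Rightarrow> int \<Rightarrow> complex" where
  "op_coeff gs = foldl (\<lambda>a g r n. (if r = 0 then 0 else - a (r - 1) (n + 1)) + (1 + g n) * a r n)
      (\<lambda>r n. if r = 0 then 1 else 0) gs"

lemma op_coeff_Nil: "op_coeff [] r n = (if r = 0 then 1 else 0)"
  by (simp add: op_coeff_def)

lemma op_coeff_snoc:
  "op_coeff (gs @ [g]) r n
    = (if r = 0 then 0 else - op_coeff gs (r - 1) (n + 1)) + (1 + g n) * op_coeff gs r n"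
  by (simp add: op_coeff_def)

lemma op_coeff_above_order: "length gs < r \<Longrightarrow> op_coeff gs r n = 0"
  by (induction gs arbitrary: r n rule: rev_induct) (simp_all add: op_coeff_Nil op_coeff_snoc)

lemma op_coeff_order: "op_coeff gs (length gs) n = (-1) ^ length gs"
  by (induction gs arbitrary: n rule: rev_induct)
    (simp_all add: op_coeff_Nil op_coeff_snoc op_coeff_above_order)

lemma op_coeff_subleading:
  assumes "gs \<noteq> []"
  shows "op_coeff gs (length gs - 1) n
     = (-1) ^ (length gs - 1) * (\<Sum>l<length gs. 1 + (gs ! l) (n + int (length gs) - 1 - int l))"
  using assms
proof (induction gs arbitrary: n rule: rev_induct)
  case Nil then show ?case by simp
next
  case (snoc g gs)
  show ?case
  proof (cases "gs = []")
    case True then show ?thesis using op_coeff_snoc[of "[]" g 0 n] by (simp add: op_coeff_Nil)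
  next
    case False
    then obtain m where m: "length gs = Suc m" by (cases gs) auto
    have "op_coeff (gs @ [g]) (length (gs @ [g]) - 1) n
        = - op_coeff gs m (n + 1) + (1 + g n) * (-1) ^ Suc m"
      using op_coeff_order[of gs n] by (simp add: op_coeff_snoc m)
    also have "\<dots> = (-1) ^ Suc m * ((\<Sum>l<Suc m. 1 + (gs ! l) (n + int (Suc m) - int l)) + (1 + g n))"
      using snoc.IH[OF False, of "n + 1"]
      by (simp add: m diff_add_eq add.commute add.left_commute) (simp add: algebra_simps)
    also have "\<dots> = (-1) ^ (length (gs @ [g]) - 1) *
        (\<Sum>l<length (gs @ [g]). 1 + ((gs @ [g]) ! l) (n + int (length (gs @ [g])) - 1 - int l))"
      by (simp add: m nth_append ac_simps)
    finally show ?thesis .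
  qed
qed

lemma apply_ops_Nil: "apply_ops [] \<phi> = \<phi>"
  by (simp add: apply_ops_def)

lemma apply_ops_snoc:
  "apply_ops (gs @ [g]) \<phi> = (\<lambda>n. - fdiff (apply_ops gs \<phi>) n + g n * apply_ops gs \<phi> n)"
  by (simp add: apply_ops_def)

lemma apply_ops_eq_sum: "apply_ops gs \<phi> n = (\<Sum>r\<le>length gs. op_coeff gs r n * \<phi> (n + int r))"
proof (induction gs arbitrary: n rule: rev_induct)
  case Nil then show ?case by (simp add: op_coeff_Nil apply_ops_Nil)
next
  case (snoc g gs)
  define m where "m = length gs"
  have IH: "apply_ops gs \<phi> n = (\<Sum>r\<le>Suc m. op_coeff gs r n * \<phi> (n + int r))"
    using snoc.IH[of n] by (simp add: m_def op_coeff_above_order)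
  have "(\<Sum>r\<le>Suc m. (if r = 0 then 0 else - op_coeff gs (r - 1) (n + 1)) * \<phi> (n + int r))
      = - (\<Sum>r\<le>m. op_coeff gs r (n + 1) * \<phi> (n + 1 + int r))"
    unfolding sum.atMost_Suc_shift by (simp add: sum_negf ac_simps)
  then have shift: "- apply_ops gs \<phi> (n + 1)
      = (\<Sum>r\<le>Suc m. (if r = 0 then 0 else - op_coeff gs (r - 1) (n + 1)) * \<phi> (n + int r))"
    using snoc.IH[of "n + 1"] by (simp add: m_def)
  have "apply_ops (gs @ [g]) \<phi> n = - apply_ops gs \<phi> (n + 1) + (1 + g n) * apply_ops gs \<phi> n"
    by (simp add: apply_ops_snoc fdiff_def algebra_simps)
  also have "\<dots> = (\<Sum>r\<le>length (gs @ [g]). op_coeff (gs @ [g]) r n * \<phi> (n + int r))"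
    unfolding shift IH
    by (simp add: op_coeff_snoc m_def[symmetric] sum.distrib sum_distrib_left
        distrib_left distrib_right mult.assoc)
  finally show ?case .
qed

lemma length_fs [simp]: "length (fs \<psi> j) = j"
  by (induction j) auto

lemma hatpsi_Suc: "hatpsi \<psi> (Suc j) = apply_ops (fs \<psi> j) (\<psi> (Suc j))"
  by (simp add: hatpsi_def)

lemma fs_Suc: "fs \<psi> (Suc j) = fs \<psi> j @ [\<lambda>n. fdiff (hatpsi \<psi> (Suc j)) n / hatpsi \<psi> (Suc j) n]"
  by (simp add: hatpsi_def Let_def)

lemma ff_Suc: "ff \<psi> (Suc j) = (\<lambda>n. fdiff (hatpsi \<psi> (Suc j)) n / hatpsi \<psi> (Suc j) n)"
  unfolding ff_def fs_Suc by (simp add: nth_append)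

lemma nth_fs: "l < j \<Longrightarrow> fs \<psi> j ! l = ff \<psi> (Suc l)"
  by (induction j) (auto simp: fs_Suc nth_append ff_def less_Suc_eq)

lemma apply_fs_annihilates:
  assumes "\<And>l n. l \<in> {1..j} \<Longrightarrow> hatpsi \<psi> l n \<noteq> 0" and "l \<in> {1..j}"
  shows "apply_ops (fs \<psi> j) (\<psi> l) n = 0"
  using assms
proof (induction j arbitrary: n)
  case 0 then show ?case by simp
next
  case (Suc j)
  show ?case
  proof (cases "l = Suc j")
    case True
    have "hatpsi \<psi> (Suc j) n \<noteq> 0" using Suc.prems(1) by simp
    then show ?thesis
      unfolding True fs_Suc apply_ops_snoc hatpsi_Suc[symmetric] by (simp add: field_simps)
  next
    case False
    then have "apply_ops (fs \<psi> j) (\<psi> l) m = 0" for m using Suc by simp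
    then show ?thesis by (simp add: fs_Suc apply_ops_snoc fdiff_def)
  qed
qed

lemma apply_fs_eigen:
  assumes "\<And>l n. l \<in> {1..i} \<Longrightarrow>
      - fdiff2 (\<psi> l) n + complex_of_real (V0 n) * \<psi> l n = e l * \<psi> l (n + 2)"
    and "\<And>l n. l \<in> {1..j} \<Longrightarrow> hatpsi \<psi> l n \<noteq> 0"
    and "j < i"
  shows "- fdiff2 (apply_ops (fs \<psi> j) (\<psi> i)) n + VV V0 \<psi> j n * apply_ops (fs \<psi> j) (\<psi> i) n
      = e i * apply_ops (fs \<psi> j) (\<psi> i) (n + 2)"
  using assms
proof (induction j arbitrary: i n)
  case 0 then show ?case by (simp add: apply_ops_Nil)
next
  case (Suc j)
  have "hatpsi \<psi> (Suc j) m \<noteq> 0" for m using Suc.prems(2) by simp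
  moreover have "- fdiff2 (hatpsi \<psi> (Suc j)) m + VV V0 \<psi> j m * hatpsi \<psi> (Suc j) m
      = e (Suc j) * hatpsi \<psi> (Suc j) (m + 2)" for m
    unfolding hatpsi_Suc using Suc by simp
  moreover have "- fdiff2 (apply_ops (fs \<psi> j) (\<psi> i)) m
      + VV V0 \<psi> j m * apply_ops (fs \<psi> j) (\<psi> i) m = e i * apply_ops (fs \<psi> j) (\<psi> i) (m + 2)" for m
    using Suc by simp
  ultimately show ?case
    using darboux_transform unfolding fs_Suc apply_ops_snoc VV.simps ff_Suc by blast
qed

lemma VV_eq_shifted_sum:
  "VV V0 \<psi> i n = complex_of_real (V0 (n + int i))
     - 2 * fdiff (\<lambda>m. \<Sum>l = 1..i. ff \<psi> l (m + int i + 1 - int l)) n"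
proof (induction i arbitrary: n)
  case 0 then show ?case by (simp add: fdiff_def)
next
  case (Suc i)
  have split: "(\<Sum>l = 1..Suc i. ff \<psi> l (m + int (Suc i) + 1 - int l))
      = (\<Sum>l = 1..i. ff \<psi> l (m + 1 + int i + 1 - int l)) + ff \<psi> (Suc i) (m + 1)" for m
    by (simp add: algebra_simps)
  show ?case
    using Suc[of "n + 1"] unfolding VV.simps split by (simp add: fdiff_def algebra_simps)
qed

definition cas_border_mat ::
    "(nat \<Rightarrow> int \<Rightarrow> complex) \<Rightarrow> nat \<Rightarrow> (int \<Rightarrow> complex) \<Rightarrow> int \<Rightarrow> complex mat" where
  "cas_border_mat \<psi> j \<phi> n =
    mat (Suc j) (Suc j) (\<lambda>(r, c). (if c < j then \<psi> (Suc c) else \<phi>) (n + int r))"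

definition cas_minor_mat :: "(nat \<Rightarrow> int \<Rightarrow> complex) \<Rightarrow> nat \<Rightarrow> int \<Rightarrow> nat \<Rightarrow> complex mat" where
  "cas_minor_mat \<psi> j n s =
    mat j j (\<lambda>(r, c). \<psi> (Suc c) (n + int (if r < s then r else Suc r)))"

lemma Cas_eq_det: "Cas \<psi> j n = det (mat j j (\<lambda>(r, c). \<psi> (Suc c) (n + int r)))"
proof -
  have "mat (length (map \<psi> [1..<Suc j])) (length (map \<psi> [1..<Suc j]))
      (\<lambda>(r, c). (map \<psi> [1..<Suc j] ! c) (n + int r)) = mat j j (\<lambda>(r, c). \<psi> (Suc c) (n + int r))"
    by (rule eq_matI) (auto simp del: upt_Suc)
  then show ?thesis unfolding Cas_def casoratian_def by simp
qed

lemma Cas_0 [simp]: "Cas \<psi> 0 n = 1"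
  unfolding Cas_eq_det by (rule det_dim_zero) simp

lemma Cas_Suc: "Cas \<psi> (Suc j) n = det (cas_border_mat \<psi> j (\<psi> (Suc j)) n)"
  unfolding Cas_eq_det cas_border_mat_def
  by (rule arg_cong[where f = det], rule eq_matI) (auto simp: less_Suc_eq)

lemma det_cas_border_mat_expand:
  "det (cas_border_mat \<psi> j \<phi> n)
    = (\<Sum>r\<le>j. \<phi> (n + int r) * ((-1) ^ (r + j) * det (cas_minor_mat \<psi> j n r)))"
proof -
  have car: "cas_border_mat \<psi> j \<phi> n \<in> carrier_mat (Suc j) (Suc j)"
    unfolding cas_border_mat_def by simp
  have "r < Suc j \<Longrightarrow> mat_delete (cas_border_mat \<psi> j \<phi> n) r j = cas_minor_mat \<psi> j n r" for r
    unfolding cas_border_mat_def cas_minor_mat_def mat_delete_def by (rule eq_matI) auto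
  then show ?thesis
    unfolding laplace_expansion_column[OF car lessI] lessThan_Suc_atMost[symmetric]
    by (intro sum.cong) (auto simp: cofactor_def cas_border_mat_def)
qed

lemma det_cas_border_mat_self:
  assumes "l \<in> {1..j}"
  shows "det (cas_border_mat \<psi> j (\<psi> l) n) = 0"
proof (rule det_identical_columns[of _ "Suc j" "l - 1" j])
  show "cas_border_mat \<psi> j (\<psi> l) n \<in> carrier_mat (Suc j) (Suc j)"
    unfolding cas_border_mat_def by simp
qed (use assms in \<open>auto simp: cas_border_mat_def col_def\<close>)

lemma det_cas_minor_mat_last: "det (cas_minor_mat \<psi> j n j) = Cas \<psi> j n"
  unfolding Cas_eq_det cas_minor_mat_def by (rule arg_cong[where f = det], rule eq_matI) auto

lemma det_cas_minor_mat_second_last: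
  assumes "j \<ge> 1"
  shows "det (cas_minor_mat \<psi> j (n + 1) (j - 1)) = Dcas \<psi> j n"
  unfolding Dcas_def cas_minor_mat_def
  by (rule arg_cong[where f = det], rule eq_matI)
    (use assms in \<open>auto intro!: arg_cong[where f = "\<psi> _"]\<close>)

lemma casoratian_rows_independent:
  assumes C: "Cas \<psi> j n \<noteq> 0"
    and dep: "\<And>l. l \<in> {1..j} \<Longrightarrow> (\<Sum>r<j. b r * \<psi> l (n + int r)) = 0"
    and "r < j"
  shows "b r = 0"
proof -
  define A where "A = mat j j (\<lambda>(c, r). \<psi> (Suc c) (n + int r))"
  have car: "A \<in> carrier_mat j j" unfolding A_def by simp
  have "transpose_mat A = mat j j (\<lambda>(r, c). \<psi> (Suc c) (n + int r))"
    unfolding A_def by (rule eq_matI) auto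
  then have "det A \<noteq> 0" using det_transpose[OF car] C by (simp add: Cas_eq_det)
  moreover have "A *\<^sub>v vec j b = 0\<^sub>v j"
  proof (rule eq_vecI)
    fix c assume "c < dim_vec (0\<^sub>v j :: complex vec)"
    then have c: "c < j" by simp
    have "(A *\<^sub>v vec j b) $ c = (\<Sum>r<j. b r * \<psi> (Suc c) (n + int r))"
      using c unfolding A_def
      by (auto simp: mult_mat_vec_def scalar_prod_def atLeast0LessThan mult.commute intro!: sum.cong)
    then show "(A *\<^sub>v vec j b) $ c = 0\<^sub>v j $ c" using dep[of "Suc c"] c by simp
  qed (simp add: A_def)
  ultimately have "vec j b = 0\<^sub>v j"
    using det_0_iff_vec_prod_zero[OF car] by (metis vec_carrier)
  then show ?thesis using \<open>r < j\<close> by (metis index_vec index_zero_vec(1))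
qed

lemma op_coeff_eq_cofactor:
  assumes C: "Cas \<psi> j n \<noteq> 0" and len: "length gs = j"
    and ann: "\<And>l. l \<in> {1..j} \<Longrightarrow> apply_ops gs (\<psi> l) n = 0"
    and "r \<le> j"
  shows "(-1) ^ (r + j) * det (cas_minor_mat \<psi> j n r) = (-1) ^ j * Cas \<psi> j n * op_coeff gs r n"
proof -
  define b where "b s = (-1) ^ (s + j) * det (cas_minor_mat \<psi> j n s)
    - (-1) ^ j * Cas \<psi> j n * op_coeff gs s n" for s
  have bj: "b j = 0"
    unfolding b_def det_cas_minor_mat_last using op_coeff_order[of gs n] len
    by (simp add: power_add[symmetric] flip: mult_2)
  have expand: "det (cas_border_mat \<psi> j \<phi> n) - (-1) ^ j * Cas \<psi> j n * apply_ops gs \<phi> n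
      = (\<Sum>r\<le>j. b r * \<phi> (n + int r))" for \<phi>
    unfolding det_cas_border_mat_expand apply_ops_eq_sum len b_def
    by (simp add: sum_subtractf sum_distrib_left algebra_simps)
  have "(\<Sum>r\<le>j. b r * \<psi> l (n + int r)) = 0" if "l \<in> {1..j}" for l
    using expand[of "\<psi> l"] det_cas_border_mat_self[OF that] ann[OF that] by simp
  then have "(\<Sum>r<j. b r * \<psi> l (n + int r)) = 0" if "l \<in> {1..j}" for l
    using that bj by (simp add: lessThan_Suc_atMost[symmetric])
  then have "b r = 0"
    using casoratian_rows_independent[OF C] bj \<open>r \<le> j\<close> by (cases "r < j") auto
  then show ?thesis unfolding b_def by simp
qed

lemma det_cas_border_mat_eq_apply_ops:
  assumes "Cas \<psi> j n \<noteq> 0" and "length gs = j"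
    and "\<And>l. l \<in> {1..j} \<Longrightarrow> apply_ops gs (\<psi> l) n = 0"
  shows "det (cas_border_mat \<psi> j \<phi> n) = (-1) ^ j * Cas \<psi> j n * apply_ops gs \<phi> n"
proof -
  have "det (cas_border_mat \<psi> j \<phi> n)
      = (\<Sum>r\<le>j. \<phi> (n + int r) * ((-1) ^ j * Cas \<psi> j n * op_coeff gs r n))"
    unfolding det_cas_border_mat_expand using op_coeff_eq_cofactor[OF assms] by (intro sum.cong) auto
  also have "\<dots> = (-1) ^ j * Cas \<psi> j n * apply_ops gs \<phi> n"
    unfolding apply_ops_eq_sum \<open>length gs = j\<close> by (simp add: sum_distrib_left algebra_simps)
  finally show ?thesis .
qed

lemma Cas_nonzero_upto:
  assumes "\<forall>j \<in> {1..k}. \<forall>n. Cas \<psi> j n \<noteq> 0" and "j \<le> k"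
  shows "Cas \<psi> j n \<noteq> 0"
  using assms by (cases j) auto

lemma hatpsi_eq_Cas_quotient:
  assumes "\<forall>j \<in> {1..k}. \<forall>n. Cas \<psi> j n \<noteq> 0" and "l \<in> {1..k}"
  shows "hatpsi \<psi> l n = (-1) ^ (l - 1) * Cas \<psi> l n / Cas \<psi> (l - 1) n"
  using assms
proof (induction k arbitrary: l n)
  case 0 then show ?case by simp
next
  case (Suc k)
  have C: "\<forall>j \<in> {1..k}. \<forall>n. Cas \<psi> j n \<noteq> 0" using Suc.prems(1) by simp
  show ?case
  proof (cases "l \<le> k")
    case True then show ?thesis using Suc.IH[OF C] Suc.prems(2) by simp
  next
    case False
    then have l: "l = Suc k" using Suc.prems(2) by simp
    have "hatpsi \<psi> j m \<noteq> 0" if "j \<in> {1..k}" for j m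
    proof -
      have "Cas \<psi> j m \<noteq> 0" "Cas \<psi> (j - 1) m \<noteq> 0"
        using that by (auto simp: Cas_nonzero_upto[OF C])
      then show ?thesis using Suc.IH[OF C that] by simp
    qed
    then have "apply_ops (fs \<psi> k) (\<psi> j) n = 0" if "j \<in> {1..k}" for j
      using apply_fs_annihilates that by blast
    then have "Cas \<psi> (Suc k) n = (-1) ^ k * Cas \<psi> k n * hatpsi \<psi> (Suc k) n"
      unfolding Cas_Suc hatpsi_Suc
      by (intro det_cas_border_mat_eq_apply_ops Cas_nonzero_upto[OF C] length_fs) auto
    then show ?thesis using l Cas_nonzero_upto[OF C, of k n] by (simp add: field_simps)
  qed
qed

lemma hatpsi_nonzero:
  assumes "\<forall>j \<in> {1..k}. \<forall>n. Cas \<psi> j n \<noteq> 0" and "l \<in> {1..k}"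
  shows "hatpsi \<psi> l n \<noteq> 0"
proof -
  have "Cas \<psi> l n \<noteq> 0" "Cas \<psi> (l - 1) n \<noteq> 0"
    using assms(2) by (auto simp: Cas_nonzero_upto[OF assms(1)])
  then show ?thesis using hatpsi_eq_Cas_quotient[OF assms] by simp
qed

lemma ff_eq_Cas_quotient:
  assumes "\<forall>j \<in> {1..k}. \<forall>n. Cas \<psi> j n \<noteq> 0" and "i \<in> {1..k}"
  shows "ff \<psi> i n = Cas \<psi> (i - 1) n / Cas \<psi> (i - 1) (n + 1) * (Cas \<psi> i (n + 1) / Cas \<psi> i n) - 1"
proof -
  obtain j where j: "i = Suc j" using assms(2) by (cases i) auto
  have "Cas \<psi> j m \<noteq> 0" "Cas \<psi> i m \<noteq> 0" for m
    using Cas_nonzero_upto[OF assms(1)] assms(2) j by auto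
  then show ?thesis
    unfolding j ff_Suc fdiff_def hatpsi_eq_Cas_quotient[OF assms(1) assms(2)[unfolded j]]
    by (simp add: field_simps)
qed

lemma sum_ff_eq_Dcas_quotient:
  assumes nonzero: "\<forall>j \<in> {1..k}. \<forall>n. Cas \<psi> j n \<noteq> 0" and i: "i \<in> {1..k}"
  shows "(\<Sum>l = 1..i. ff \<psi> l (m + int i + 1 - int l)) = Dcas \<psi> i m / Cas \<psi> i (m + 1) - of_nat i"
proof -
  define S where "S = (\<Sum>l = 1..i. ff \<psi> l (m + int i + 1 - int l))"
  obtain j where j: "i = Suc j" using i by (cases i) auto
  have C: "Cas \<psi> i (m + 1) \<noteq> 0" using nonzero i by simp
  have "hatpsi \<psi> l n \<noteq> 0" if "l \<in> {1..i}" for l n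
    using hatpsi_nonzero[OF nonzero] i that by auto
  then have "apply_ops (fs \<psi> i) (\<psi> l) (m + 1) = 0" if "l \<in> {1..i}" for l
    using apply_fs_annihilates that by blast
  then have "(-1) ^ (j + i) * Dcas \<psi> i m
      = (-1) ^ i * Cas \<psi> i (m + 1) * op_coeff (fs \<psi> i) j (m + 1)"
    using op_coeff_eq_cofactor[OF C length_fs[of \<psi> i], where r = j]
      det_cas_minor_mat_second_last[where j = i and n = m] j
    by simp
  moreover have "op_coeff (fs \<psi> i) j (m + 1) = (-1) ^ j * (of_nat i + S)"
  proof -
    have "fs \<psi> i \<noteq> []" "i - 1 = j" using j by (simp_all flip: length_0_conv)
    then have "op_coeff (fs \<psi> i) j (m + 1)
        = (-1) ^ j * (\<Sum>l<i. 1 + (fs \<psi> i ! l) (m + 1 + int i - 1 - int l))"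
      using op_coeff_subleading[of "fs \<psi> i" "m + 1"] by simp
    also have "\<dots> = (-1) ^ j * (\<Sum>l<i. 1 + ff \<psi> (Suc l) (m + int i - int l))"
      by (intro arg_cong[where f = "\<lambda>x. (-1) ^ j * x"] sum.cong) (simp_all add: nth_fs)
    also have "\<dots> = (-1) ^ j * (of_nat i + S)"
      unfolding S_def by (simp add: sum.atLeast1_atMost_eq sum.distrib algebra_simps)
    finally show ?thesis .
  qed
  ultimately have "(-1) ^ i * (-1) ^ j * Dcas \<psi> i m
      = (-1) ^ i * (-1) ^ j * (Cas \<psi> i (m + 1) * (of_nat i + S))"
    by (simp add: power_add ac_simps)
  then have "Dcas \<psi> i m = Cas \<psi> i (m + 1) * (of_nat i + S)" by simp
  then show ?thesis using C unfolding S_def[symmetric] by (simp add: field_simps)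
qed

theorem theorem4:
  fixes V0 :: "int \<Rightarrow> real" and \<psi> :: "nat \<Rightarrow> int \<Rightarrow> complex"
    and \<epsilon> :: "nat \<Rightarrow> real" and k :: nat
  assumes eq: "\<And>i n. i \<in> {1..k} \<Longrightarrow>
      - fdiff2 (\<psi> i) n + complex_of_real (V0 n) * \<psi> i n = complex_of_real (\<epsilon> i) * \<psi> i (n + 2)"
    and distinct: "inj_on \<epsilon> {1..k}"
    and nonzero: "\<And>j n. j \<in> {1..k} \<Longrightarrow> Cas \<psi> j n \<noteq> 0"
  shows "\<forall>i \<in> {1..k}. \<forall>n.
      hatpsi \<psi> i n = (-1) ^ (i - 1) * Cas \<psi> i n / Cas \<psi> (i - 1) n
    \<and> - fdiff2 (hatpsi \<psi> i) n + VV V0 \<psi> (i - 1) n * hatpsi \<psi> i n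
        = complex_of_real (\<epsilon> i) * hatpsi \<psi> i (n + 2)
    \<and> ff \<psi> i n = Cas \<psi> (i - 1) n / Cas \<psi> (i - 1) (n + 1)
                 * (Cas \<psi> i (n + 1) / Cas \<psi> i n) - 1
    \<and> VV V0 \<psi> i n = complex_of_real (V0 (n + int i))
        - 2 * fdiff (\<lambda>m. \<Sum>l = 1..i. ff \<psi> l (m + int i + 1 - int l)) n
    \<and> VV V0 \<psi> i n = complex_of_real (V0 (n + int i))
        - 2 * fdiff (\<lambda>m. Dcas \<psi> i m / Cas \<psi> i (m + 1)) n"
proof (intro ballI allI conjI)
  have C: "\<forall>j \<in> {1..k}. \<forall>n. Cas \<psi> j n \<noteq> 0" using nonzero by blast
  fix i n assume i: "i \<in> {1..k}"
  show "hatpsi \<psi> i n = (-1) ^ (i - 1) * Cas \<psi> i n / Cas \<psi> (i - 1) n"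
    by (rule hatpsi_eq_Cas_quotient[OF C i])
  show "- fdiff2 (hatpsi \<psi> i) n + VV V0 \<psi> (i - 1) n * hatpsi \<psi> i n
      = complex_of_real (\<epsilon> i) * hatpsi \<psi> i (n + 2)"
    unfolding hatpsi_def
    by (rule apply_fs_eigen[where e = "\<lambda>l. complex_of_real (\<epsilon> l)"])
      (use i eq hatpsi_nonzero[OF C] in auto)
  show "ff \<psi> i n = Cas \<psi> (i - 1) n / Cas \<psi> (i - 1) (n + 1) * (Cas \<psi> i (n + 1) / Cas \<psi> i n) - 1"
    by (rule ff_eq_Cas_quotient[OF C i])
  show sum: "VV V0 \<psi> i n = complex_of_real (V0 (n + int i))
      - 2 * fdiff (\<lambda>m. \<Sum>l = 1..i. ff \<psi> l (m + int i + 1 - int l)) n"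
    by (rule VV_eq_shifted_sum)
  then show "VV V0 \<psi> i n = complex_of_real (V0 (n + int i))
      - 2 * fdiff (\<lambda>m. Dcas \<psi> i m / Cas \<psi> i (m + 1)) n"
    unfolding sum_ff_eq_Dcas_quotient[OF C i] by (simp add: fdiff_def)
qed

end
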